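(* Let $\mathcal C$ be a decomposition finite category and $\mathscr B=\mathbb Z[\mathrm{Mor}(\mathcal C)]$ with coproduct $\Delta(\phi)=\sum_{\phi=\phi_1\circ\phi_0}\phi_0\otimes\phi_1$. Let $\mathcal C_\sim\subset\mathscr B$ be the subgroup spanned by all $f-g$ with $f\sim g$. Then $\Delta(\mathcal C_\sim)\subset\mathscr B\otimes\mathcal C_\sim+\mathcal C_\sim\otimes\mathscr B$, so $\Delta$ descends to a coassociative coproduct on $\mathscr B/\mathcal C_\sim$. Furthermore, after extending scalars to a commutative ring $R$ in which $|\mathrm{Iso}(X)|\,|\mathrm{Aut}(X)|$ is invertible for every object $X$ (e.g. $R=\mathbb Q$), the map $\bar\epsilon$ on $R[\mathrm{Mor}(\mathcal C)]/\mathcal C_\sim$ defined on classes of morphisms by $\bar\epsilon([f])=\frac{1}{|\mathrm{Iso}(X)|\,|\mathrm{Aut}(X)|}$ if $[f]=[\mathrm{id}_X]$ and $\bar\epsilon([f])=0$ otherwise, is a two-sided counit.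
   Context: A category is decomposition finite if every morphism has only finitely many factorizations $\phi=\phi_1\circ\phi_0$ (then $\mathrm{Aut}(X)$ and the set $\mathrm{Iso}(X)$ of objects isomorphic to $X$ are finite). For morphisms $f\colon X\to Y$ and $g\colon X'\to Y'$, $f\sim g$ means there are isomorphisms $\sigma\colon X\to X'$ and $\sigma'\colon Y\to Y'$ with $\sigma'\circ f=g\circ\sigma$; $[f]$ denotes the class of $f$ in $\mathscr B/\mathcal C_\sim$. Note $f\sim\mathrm{id}_X$ iff $f$ is an isomorphism between objects isomorphic to $X$. *)

theory Defs
  imports "HOL-Library.Poly_Mapping"
begin

text \<open>A (small) category given concretely: objects, morphisms, domain, codomain,
  composition (Comp C g f is g o f) and identities.\<close>

record ('o, 'm) category =
  Ob :: "'o set"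
  Mor :: "'m set"
  Dom :: "'m \<Rightarrow> 'o"
  Cod :: "'m \<Rightarrow> 'o"
  Comp :: "'m \<Rightarrow> 'm \<Rightarrow> 'm"
  Ident :: "'o \<Rightarrow> 'm"

definition is_category :: "('o, 'm) category \<Rightarrow> bool" where
  "is_category C \<longleftrightarrow>
     (\<forall>f\<in>Mor C. Dom C f \<in> Ob C \<and> Cod C f \<in> Ob C) \<and>
     (\<forall>X\<in>Ob C. Ident C X \<in> Mor C \<and> Dom C (Ident C X) = X \<and> Cod C (Ident C X) = X) \<and>
     (\<forall>f\<in>Mor C. \<forall>g\<in>Mor C. Cod C f = Dom C g \<longrightarrow>
         Comp C g f \<in> Mor C \<and> Dom C (Comp C g f) = Dom C f \<and> Cod C (Comp C g f) = Cod C g) \<and>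
     (\<forall>f\<in>Mor C. \<forall>g\<in>Mor C. \<forall>h\<in>Mor C. Cod C f = Dom C g \<longrightarrow> Cod C g = Dom C h \<longrightarrow>
         Comp C h (Comp C g f) = Comp C (Comp C h g) f) \<and>
     (\<forall>f\<in>Mor C. Comp C f (Ident C (Dom C f)) = f \<and> Comp C (Ident C (Cod C f)) f = f)"

definition decomps :: "('o, 'm) category \<Rightarrow> 'm \<Rightarrow> ('m \<times> 'm) set" where
  "decomps C \<phi> = {(\<phi>0, \<phi>1). \<phi>0 \<in> Mor C \<and> \<phi>1 \<in> Mor C \<and> Cod C \<phi>0 = Dom C \<phi>1 \<and> Comp C \<phi>1 \<phi>0 = \<phi>}"

definition decomposition_finite :: "('o, 'm) category \<Rightarrow> bool" where
  "decomposition_finite C \<longleftrightarrow> (\<forall>\<phi>\<in>Mor C. finite (decomps C \<phi>))"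

definition is_iso :: "('o, 'm) category \<Rightarrow> 'm \<Rightarrow> bool" where
  "is_iso C \<sigma> \<longleftrightarrow> \<sigma> \<in> Mor C \<and> (\<exists>\<tau>\<in>Mor C. Dom C \<tau> = Cod C \<sigma> \<and> Cod C \<tau> = Dom C \<sigma> \<and>
      Comp C \<tau> \<sigma> = Ident C (Dom C \<sigma>) \<and> Comp C \<sigma> \<tau> = Ident C (Cod C \<sigma>))"

definition Aut :: "('o, 'm) category \<Rightarrow> 'o \<Rightarrow> 'm set" where
  "Aut C X = {\<sigma>. is_iso C \<sigma> \<and> Dom C \<sigma> = X \<and> Cod C \<sigma> = X}"

definition Iso :: "('o, 'm) category \<Rightarrow> 'o \<Rightarrow> 'o set" where
  "Iso C X = {Y \<in> Ob C. \<exists>\<sigma>. is_iso C \<sigma> \<and> Dom C \<sigma> = X \<and> Cod C \<sigma> = Y}"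

definition mor_sim :: "('o, 'm) category \<Rightarrow> 'm \<Rightarrow> 'm \<Rightarrow> bool" where
  "mor_sim C f g \<longleftrightarrow> f \<in> Mor C \<and> g \<in> Mor C \<and>
     (\<exists>\<sigma> \<sigma>'. is_iso C \<sigma> \<and> is_iso C \<sigma>' \<and> Dom C \<sigma> = Dom C f \<and> Cod C \<sigma> = Dom C g \<and>
        Dom C \<sigma>' = Cod C f \<and> Cod C \<sigma>' = Cod C g \<and> Comp C \<sigma>' f = Comp C g \<sigma>)"

text \<open>Free modules: R[Mor C] is represented by finitely supported functions
  from morphisms to R with support in Mor C; the tensor square by finitely supported
  functions on pairs of morphisms, etc.\<close>

definition free_mod :: "('o, 'm) category \<Rightarrow> ('m \<Rightarrow>\<^sub>0 'r::comm_ring_1) set" where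
  "free_mod C = {x. Poly_Mapping.keys x \<subseteq> Mor C}"

inductive_set lspan :: "('a \<Rightarrow>\<^sub>0 'r::comm_ring_1) set \<Rightarrow> ('a \<Rightarrow>\<^sub>0 'r) set" for S where
  lspan_zero: "0 \<in> lspan S"
| lspan_step: "x \<in> S \<Longrightarrow> y \<in> lspan S \<Longrightarrow> Poly_Mapping.map (\<lambda>v. c * v) x + y \<in> lspan S"

definition sim_gens :: "('o, 'm) category \<Rightarrow> ('m \<Rightarrow>\<^sub>0 'r::comm_ring_1) set" where
  "sim_gens C = {Poly_Mapping.single f 1 - Poly_Mapping.single g 1 | f g. mor_sim C f g}"

definition Csim :: "('o, 'm) category \<Rightarrow> ('m \<Rightarrow>\<^sub>0 'r::comm_ring_1) set" where
  "Csim C = lspan (sim_gens C)"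

definition tens :: "('m \<Rightarrow>\<^sub>0 'r::comm_ring_1) \<Rightarrow> ('m \<Rightarrow>\<^sub>0 'r) \<Rightarrow> ('m \<times> 'm \<Rightarrow>\<^sub>0 'r)" where
  "tens u v = (\<Sum>a\<in>Poly_Mapping.keys u. \<Sum>b\<in>Poly_Mapping.keys v. Poly_Mapping.single (a, b) (Poly_Mapping.lookup u a * Poly_Mapping.lookup v b))"

definition tens_sub :: "('m \<Rightarrow>\<^sub>0 'r::comm_ring_1) set \<Rightarrow> ('m \<Rightarrow>\<^sub>0 'r) set \<Rightarrow> ('m \<times> 'm \<Rightarrow>\<^sub>0 'r) set" where
  "tens_sub U V = lspan {tens u v | u v. u \<in> U \<and> v \<in> V}"

definition sub_sum :: "('a \<Rightarrow>\<^sub>0 'r::comm_ring_1) set \<Rightarrow> ('a \<Rightarrow>\<^sub>0 'r) set \<Rightarrow> ('a \<Rightarrow>\<^sub>0 'r) set" where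
  "sub_sum U V = {u + v | u v. u \<in> U \<and> v \<in> V}"

definition coprod :: "('o, 'm) category \<Rightarrow> ('m \<Rightarrow>\<^sub>0 'r::comm_ring_1) \<Rightarrow> ('m \<times> 'm \<Rightarrow>\<^sub>0 'r)" where
  "coprod C x = (\<Sum>\<phi>\<in>Poly_Mapping.keys x. \<Sum>d\<in>decomps C \<phi>. Poly_Mapping.single d (Poly_Mapping.lookup x \<phi>))"

definition coprod_id :: "('o, 'm) category \<Rightarrow> ('m \<times> 'm \<Rightarrow>\<^sub>0 'r::comm_ring_1) \<Rightarrow> ('m \<times> 'm \<times> 'm \<Rightarrow>\<^sub>0 'r)" where
  "coprod_id C y = (\<Sum>p\<in>Poly_Mapping.keys y. \<Sum>d\<in>decomps C (fst p).
      Poly_Mapping.single (fst d, snd d, snd p) (Poly_Mapping.lookup y p))"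

definition id_coprod :: "('o, 'm) category \<Rightarrow> ('m \<times> 'm \<Rightarrow>\<^sub>0 'r::comm_ring_1) \<Rightarrow> ('m \<times> 'm \<times> 'm \<Rightarrow>\<^sub>0 'r)" where
  "id_coprod C y = (\<Sum>p\<in>Poly_Mapping.keys y. \<Sum>d\<in>decomps C (snd p).
      Poly_Mapping.single (fst p, fst d, snd d) (Poly_Mapping.lookup y p))"

definition unit_inv :: "'r::comm_ring_1 \<Rightarrow> 'r" where
  "unit_inv r = (SOME s. r * s = 1)"

definition eps_val :: "('o, 'm) category \<Rightarrow> 'm \<Rightarrow> 'r::comm_ring_1" where
  "eps_val C f = (if \<exists>X\<in>Ob C. mor_sim C f (Ident C X)
     then (let X = (SOME X. X \<in> Ob C \<and> mor_sim C f (Ident C X))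
           in unit_inv (of_nat (card (Iso C X) * card (Aut C X))))
     else 0)"

definition eps :: "('o, 'm) category \<Rightarrow> ('m \<Rightarrow>\<^sub>0 'r::comm_ring_1) \<Rightarrow> 'r" where
  "eps C x = (\<Sum>f\<in>Poly_Mapping.keys x. Poly_Mapping.lookup x f * eps_val C f)"

definition eps_id :: "('o, 'm) category \<Rightarrow> ('m \<times> 'm \<Rightarrow>\<^sub>0 'r::comm_ring_1) \<Rightarrow> ('m \<Rightarrow>\<^sub>0 'r)" where
  "eps_id C y = (\<Sum>p\<in>Poly_Mapping.keys y. Poly_Mapping.single (snd p) (eps_val C (fst p) * Poly_Mapping.lookup y p))"

definition id_eps :: "('o, 'm) category \<Rightarrow> ('m \<times> 'm \<Rightarrow>\<^sub>0 'r::comm_ring_1) \<Rightarrow> ('m \<Rightarrow>\<^sub>0 'r)" where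
  "id_eps C y = (\<Sum>p\<in>Poly_Mapping.keys y. Poly_Mapping.single (fst p) (Poly_Mapping.lookup y p * eps_val C (snd p)))"

end

theory Submission
  imports Defs
begin

text \<open>
  If isomorphisms \<open>s, s'\<close> exhibit \<open>f \<sim> g\<close>, then \<open>(a, b) \<mapsto> (a \<circ> s\<^sup>-\<^sup>1, s' \<circ> b)\<close> is a
  bijection between the factorizations of \<open>f\<close> and of \<open>g\<close> pairing similar factors, so
  \<open>\<Delta>(f - g)\<close> is a sum of terms \<open>a \<otimes> b - a' \<otimes> b' = a' \<otimes> (b - b') + (a - a') \<otimes> b\<close>.
  Coassociativity holds coefficientwise: both iterated coproducts give a composable triple
  \<open>(a, b, c)\<close> the coefficient of \<open>c \<circ> b \<circ> a\<close>.
  For the counit, only the factorizations \<open>\<phi> = \<phi>\<^sub>1 \<circ> \<phi>\<^sub>0\<close> with \<open>\<phi>\<^sub>0\<close> invertible contribute to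
  \<open>(\<epsilon> \<otimes> id) \<Delta> \<phi>\<close>; they correspond to the isomorphisms out of the domain \<open>X\<close> of \<open>\<phi>\<close>, which
  number \<open>|Iso X| |Aut X|\<close>, each \<open>\<phi>\<^sub>0\<close> has weight \<open>1 / (|Iso X| |Aut X|)\<close>, and each
  \<open>\<phi>\<^sub>1 = \<phi> \<circ> \<phi>\<^sub>0\<^sup>-\<^sup>1\<close> is similar to \<open>\<phi>\<close>.
\<close>

section \<open>Finitely supported functions and spans\<close>

abbreviation scale :: "'r::comm_ring_1 \<Rightarrow> ('a \<Rightarrow>\<^sub>0 'r) \<Rightarrow> ('a \<Rightarrow>\<^sub>0 'r)" where
  "scale c x \<equiv> Poly_Mapping.map ((*) c) x"

lemma lookup_scale [simp]: "Poly_Mapping.lookup (scale c x) k = c * Poly_Mapping.lookup x k"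
  by (simp add: map.rep_eq when_def)

lemma keys_scale_subset: "Poly_Mapping.keys (scale c x) \<subseteq> Poly_Mapping.keys x"
  by (auto simp: in_keys_iff)

lemma scale_add: "scale c (x + y) = scale c x + scale c y"
  by (rule poly_mapping_eqI) (simp add: lookup_add algebra_simps)

lemma scale_scale: "scale c (scale d x) = scale (c * d) x"
  by (rule poly_mapping_eqI) (simp add: algebra_simps)

lemma scale_one: "scale 1 x = x"
  by (rule poly_mapping_eqI) simp

lemma scale_minus_one: "scale (-1) x = - x"
  by (rule poly_mapping_eqI) simp

lemma scale_zero: "scale c 0 = 0"
  by (rule poly_mapping_eqI) simp

lemma lspan_base: "x \<in> S \<Longrightarrow> x \<in> lspan S"
  using lspan_step[of x S 0 1] by (simp add: scale_one lspan_zero)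

lemma lspan_add: "x \<in> lspan S \<Longrightarrow> y \<in> lspan S \<Longrightarrow> x + y \<in> lspan S"
proof (induction x rule: lspan.induct)
  case (lspan_step x y' c)
  then show ?case using lspan.lspan_step[of x S "y' + y" c] by (simp add: add.assoc)
qed simp

lemma lspan_scale: "x \<in> lspan S \<Longrightarrow> scale c x \<in> lspan S"
proof (induction x rule: lspan.induct)
  case lspan_zero
  then show ?case by (simp add: scale_zero lspan.lspan_zero)
next
  case (lspan_step x y d)
  then show ?case using lspan.lspan_step[of x S "scale c y" "c * d"]
    by (simp add: scale_add scale_scale)
qed

lemma lspan_sum: "finite A \<Longrightarrow> (\<And>i. i \<in> A \<Longrightarrow> f i \<in> lspan S) \<Longrightarrow> sum f A \<in> lspan S"
  by (induction A rule: finite_induct) (auto intro: lspan_add lspan_zero)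

lemma lspan_mono: "S \<subseteq> T \<Longrightarrow> lspan S \<subseteq> lspan T"
proof
  show "x \<in> lspan T" if "S \<subseteq> T" "x \<in> lspan S" for x
    using that(2) by induction (use that(1) in \<open>auto intro: lspan.intros\<close>)
qed

lemma sub_sum_lspan: "sub_sum (lspan A) (lspan B) = lspan (A \<union> B)"
proof
  show "sub_sum (lspan A) (lspan B) \<subseteq> lspan (A \<union> B)"
    using lspan_mono[of A "A \<union> B"] lspan_mono[of B "A \<union> B"]
    by (auto simp: sub_sum_def intro: lspan_add)
  show "lspan (A \<union> B) \<subseteq> sub_sum (lspan A) (lspan B)"
  proof
    fix x assume "x \<in> lspan (A \<union> B)"
    then show "x \<in> sub_sum (lspan A) (lspan B)"
    proof induction
      case lspan_zero
      show ?case unfolding sub_sum_def by (auto intro!: exI[of _ 0] lspan.lspan_zero)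
    next
      case (lspan_step x y c)
      then obtain u v where "y = u + v" "u \<in> lspan A" "v \<in> lspan B"
        unfolding sub_sum_def by blast
      moreover have "scale c x + (u + v) = (scale c x + u) + v"
                    "scale c x + (u + v) = u + (scale c x + v)"
        by (simp_all add: algebra_simps)
      ultimately show ?case
        using lspan_step.hyps(1) unfolding sub_sum_def by (blast intro: lspan.lspan_step)
    qed
  qed
qed

lemma sum_keys_superset:
  fixes F :: "'a \<Rightarrow> 'r::zero \<Rightarrow> 'b::comm_monoid_add"
  assumes "finite S" "Poly_Mapping.keys x \<subseteq> S" "\<And>k. F k 0 = 0"
  shows "(\<Sum>k\<in>Poly_Mapping.keys x. F k (Poly_Mapping.lookup x k)) = (\<Sum>k\<in>S. F k (Poly_Mapping.lookup x k))"
  by (rule sum.mono_neutral_left) (use assms in \<open>auto simp: in_keys_iff\<close>)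

lemma sum_keys_add:
  fixes F :: "'a \<Rightarrow> 'r::monoid_add \<Rightarrow> 'b::comm_monoid_add"
  assumes F0: "\<And>k. F k 0 = 0" and F_add: "\<And>k a b. F k (a + b) = F k a + F k b"
  shows "(\<Sum>k\<in>Poly_Mapping.keys (x + y). F k (Poly_Mapping.lookup (x + y) k)) =
    (\<Sum>k\<in>Poly_Mapping.keys x. F k (Poly_Mapping.lookup x k)) + (\<Sum>k\<in>Poly_Mapping.keys y. F k (Poly_Mapping.lookup y k))"
proof -
  let ?S = "Poly_Mapping.keys x \<union> Poly_Mapping.keys y"
  have "(\<Sum>k\<in>Poly_Mapping.keys (x + y). F k (Poly_Mapping.lookup (x + y) k)) = (\<Sum>k\<in>?S. F k (Poly_Mapping.lookup (x + y) k))"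
    by (intro sum_keys_superset F0) (use keys_add[of x y] in auto)
  also have "\<dots> = (\<Sum>k\<in>?S. F k (Poly_Mapping.lookup x k)) + (\<Sum>k\<in>?S. F k (Poly_Mapping.lookup y k))"
    by (simp add: lookup_add F_add sum.distrib)
  also have "\<dots> = (\<Sum>k\<in>Poly_Mapping.keys x. F k (Poly_Mapping.lookup x k)) + (\<Sum>k\<in>Poly_Mapping.keys y. F k (Poly_Mapping.lookup y k))"
    by (intro arg_cong2[where f = "(+)"] sum_keys_superset[symmetric] F0) auto
  finally show ?thesis .
qed

lemma single_sum_keys: "x = (\<Sum>k\<in>Poly_Mapping.keys x. Poly_Mapping.single k (Poly_Mapping.lookup x k))"
  by (rule poly_mapping_eqI) (simp add: lookup_sum lookup_single when_def in_keys_iff)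

lemma sum_single_const: "(\<Sum>i\<in>A. Poly_Mapping.single p (k::'r::comm_ring_1)) = Poly_Mapping.single p (of_nat (card A) * k)"
  by (rule poly_mapping_eqI) (simp add: lookup_sum lookup_single when_def)

lemma lookup_tens: "Poly_Mapping.lookup (tens u v) (a, b) = Poly_Mapping.lookup u a * Poly_Mapping.lookup v b"
proof -
  have "Poly_Mapping.lookup (tens u v) (a, b) =
      (\<Sum>a'\<in>Poly_Mapping.keys u. (Poly_Mapping.lookup u a' * Poly_Mapping.lookup v b when b \<in> Poly_Mapping.keys v) when a' = a)"
    unfolding tens_def lookup_sum lookup_single by (intro sum.cong refl) (auto simp: when_def)
  then show ?thesis by (auto simp: when_def in_keys_iff)
qed

lemma single_pair_diff_eq_tens:
  "Poly_Mapping.single (a, b) 1 - Poly_Mapping.single (a', b') (1::'r::comm_ring_1) =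
    tens (Poly_Mapping.single a' 1) (Poly_Mapping.single b 1 - Poly_Mapping.single b' 1)
    + tens (Poly_Mapping.single a 1 - Poly_Mapping.single a' 1) (Poly_Mapping.single b 1)"
proof (rule poly_mapping_eqI)
  fix k :: "'a \<times> 'a"
  show "Poly_Mapping.lookup (Poly_Mapping.single (a, b) 1 - Poly_Mapping.single (a', b') 1) k =
    Poly_Mapping.lookup (tens (Poly_Mapping.single a' 1) (Poly_Mapping.single b 1 - Poly_Mapping.single b' 1)
      + tens (Poly_Mapping.single a 1 - Poly_Mapping.single a' (1::'r)) (Poly_Mapping.single b 1)) k"
    by (cases k) (simp add: lookup_add lookup_minus lookup_tens lookup_single when_def)
qed

lemma unit_inv_right: "(r::'r::comm_ring_1) dvd 1 \<Longrightarrow> r * unit_inv r = 1"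
  unfolding unit_inv_def by (rule someI_ex) (metis dvdE)

section \<open>Isomorphisms and similar morphisms\<close>

definition inv_mor :: "('o, 'm) category \<Rightarrow> 'm \<Rightarrow> 'm" where
  "inv_mor C s = (SOME t. t \<in> Mor C \<and> Dom C t = Cod C s \<and> Cod C t = Dom C s \<and>
      Comp C t s = Ident C (Dom C s) \<and> Comp C s t = Ident C (Cod C s))"

definition isos :: "('o, 'm) category \<Rightarrow> 'o \<Rightarrow> 'o \<Rightarrow> 'm set" where
  "isos C X Y = {s. is_iso C s \<and> Dom C s = X \<and> Cod C s = Y}"

definition isos_from :: "('o, 'm) category \<Rightarrow> 'o \<Rightarrow> 'm set" where
  "isos_from C X = {s. is_iso C s \<and> Dom C s = X}"

definition isos_to :: "('o, 'm) category \<Rightarrow> 'o \<Rightarrow> 'm set" where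
  "isos_to C Y = {s. is_iso C s \<and> Cod C s = Y}"

definition iso_square :: "('o, 'm) category \<Rightarrow> 'm \<Rightarrow> 'm \<Rightarrow> 'm \<Rightarrow> 'm \<Rightarrow> bool" where
  "iso_square C f g s s' \<longleftrightarrow> f \<in> Mor C \<and> g \<in> Mor C \<and> is_iso C s \<and> is_iso C s' \<and>
     Dom C s = Dom C f \<and> Cod C s = Dom C g \<and> Dom C s' = Cod C f \<and> Cod C s' = Cod C g \<and>
     Comp C s' f = Comp C g s"

lemma mor_sim_iff_iso_square: "mor_sim C f g \<longleftrightarrow> (\<exists>s s'. iso_square C f g s s')"
  unfolding mor_sim_def iso_square_def by blast

lemma is_iso_Mor: "is_iso C s \<Longrightarrow> s \<in> Mor C"
  unfolding is_iso_def by blast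

lemma inv_mor:
  assumes "is_iso C s"
  shows "inv_mor C s \<in> Mor C" "Dom C (inv_mor C s) = Cod C s" "Cod C (inv_mor C s) = Dom C s"
    "Comp C (inv_mor C s) s = Ident C (Dom C s)" "Comp C s (inv_mor C s) = Ident C (Cod C s)"
proof -
  have "\<exists>t. t \<in> Mor C \<and> Dom C t = Cod C s \<and> Cod C t = Dom C s \<and>
      Comp C t s = Ident C (Dom C s) \<and> Comp C s t = Ident C (Cod C s)"
    using assms unfolding is_iso_def by blast
  from someI_ex[OF this, folded inv_mor_def]
  show "inv_mor C s \<in> Mor C" "Dom C (inv_mor C s) = Cod C s" "Cod C (inv_mor C s) = Dom C s"
    "Comp C (inv_mor C s) s = Ident C (Dom C s)" "Comp C s (inv_mor C s) = Ident C (Cod C s)"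
    by auto
qed

lemma is_iso_inv_mor: "is_iso C s \<Longrightarrow> is_iso C (inv_mor C s)"
  unfolding is_iso_def[of C "inv_mor C s"] using inv_mor[of C s] is_iso_Mor[of C s] by auto

locale cat =
  fixes C :: "('o, 'm) category"
  assumes is_category: "is_category C"
begin

lemma Dom_in_Ob: "f \<in> Mor C \<Longrightarrow> Dom C f \<in> Ob C"
  and Cod_in_Ob: "f \<in> Mor C \<Longrightarrow> Cod C f \<in> Ob C"
  using is_category unfolding is_category_def by auto

lemma Ident_in_Mor [simp]: "X \<in> Ob C \<Longrightarrow> Ident C X \<in> Mor C"
  and Dom_Ident [simp]: "X \<in> Ob C \<Longrightarrow> Dom C (Ident C X) = X"
  and Cod_Ident [simp]: "X \<in> Ob C \<Longrightarrow> Cod C (Ident C X) = X"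
  using is_category unfolding is_category_def by auto

lemma Comp_in_Mor [simp]: "f \<in> Mor C \<Longrightarrow> g \<in> Mor C \<Longrightarrow> Cod C f = Dom C g \<Longrightarrow> Comp C g f \<in> Mor C"
  and Dom_Comp [simp]: "f \<in> Mor C \<Longrightarrow> g \<in> Mor C \<Longrightarrow> Cod C f = Dom C g \<Longrightarrow> Dom C (Comp C g f) = Dom C f"
  and Cod_Comp [simp]: "f \<in> Mor C \<Longrightarrow> g \<in> Mor C \<Longrightarrow> Cod C f = Dom C g \<Longrightarrow> Cod C (Comp C g f) = Cod C g"
  using is_category unfolding is_category_def by auto

lemma Comp_assoc:
  "f \<in> Mor C \<Longrightarrow> g \<in> Mor C \<Longrightarrow> h \<in> Mor C \<Longrightarrow> Cod C f = Dom C g \<Longrightarrow> Cod C g = Dom C h \<Longrightarrow>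
    Comp C h (Comp C g f) = Comp C (Comp C h g) f"
  using is_category unfolding is_category_def by auto

lemma Comp_Ident_right [simp]: "f \<in> Mor C \<Longrightarrow> Dom C f = X \<Longrightarrow> Comp C f (Ident C X) = f"
  and Comp_Ident_left [simp]: "f \<in> Mor C \<Longrightarrow> Cod C f = X \<Longrightarrow> Comp C (Ident C X) f = f"
  using is_category unfolding is_category_def by auto

lemma inv_mor_Comp_cancel_left:
  "is_iso C s \<Longrightarrow> f \<in> Mor C \<Longrightarrow> Cod C f = Dom C s \<Longrightarrow> Comp C (inv_mor C s) (Comp C s f) = f"
  and Comp_inv_mor_cancel_left:
  "is_iso C s \<Longrightarrow> f \<in> Mor C \<Longrightarrow> Cod C f = Cod C s \<Longrightarrow> Comp C s (Comp C (inv_mor C s) f) = f"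
  and inv_mor_Comp_cancel_right:
  "is_iso C s \<Longrightarrow> f \<in> Mor C \<Longrightarrow> Dom C f = Cod C s \<Longrightarrow> Comp C (Comp C f s) (inv_mor C s) = f"
  and Comp_inv_mor_cancel_right:
  "is_iso C s \<Longrightarrow> f \<in> Mor C \<Longrightarrow> Dom C f = Dom C s \<Longrightarrow> Comp C (Comp C f (inv_mor C s)) s = f"
  by (simp_all add: Comp_assoc Comp_assoc[symmetric] inv_mor is_iso_Mor)

lemma is_iso_Ident: "X \<in> Ob C \<Longrightarrow> is_iso C (Ident C X)"
  unfolding is_iso_def by (auto intro: bexI[of _ "Ident C X"])

lemma is_iso_Comp:
  assumes s: "is_iso C s" and s': "is_iso C s'" and "Cod C s = Dom C s'"
  shows "is_iso C (Comp C s' s)"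
proof -
  note [simp] = inv_mor[OF s] inv_mor[OF s'] is_iso_Mor[OF s] is_iso_Mor[OF s'] assms(3)
  let ?t = "Comp C (inv_mor C s) (inv_mor C s')"
  have left: "Comp C ?t (Comp C s' s) = Ident C (Dom C s)"
    by (simp add: Comp_assoc[symmetric] inv_mor_Comp_cancel_left s s')
  have right: "Comp C (Comp C s' s) ?t = Ident C (Cod C s')"
    by (simp add: Comp_assoc[symmetric] Comp_inv_mor_cancel_left s s')
  show ?thesis
    unfolding is_iso_def using left right by (auto intro!: bexI[of _ ?t])
qed

lemma inv_mor_inv_mor: assumes "is_iso C s" shows "inv_mor C (inv_mor C s) = s"
proof -
  note [simp] = inv_mor[OF assms] inv_mor[OF is_iso_inv_mor[OF assms]] is_iso_Mor[OF assms]
  have "inv_mor C (inv_mor C s) = Comp C (inv_mor C (inv_mor C s)) (Comp C (inv_mor C s) s)"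
    by simp
  also have "\<dots> = s"
    by (rule inv_mor_Comp_cancel_left) (simp_all add: assms is_iso_inv_mor)
  finally show ?thesis .
qed

lemma mor_sim_Comp_iso_right:
  assumes a: "a \<in> Mor C" and u: "is_iso C u" "Cod C u = Dom C a"
  shows "mor_sim C a (Comp C a u)"
proof -
  have "iso_square C a (Comp C a u) (inv_mor C u) (Ident C (Cod C a))"
    unfolding iso_square_def
    using assms by (simp add: inv_mor is_iso_inv_mor is_iso_Mor is_iso_Ident Cod_in_Ob
        inv_mor_Comp_cancel_right)
  then show ?thesis unfolding mor_sim_iff_iso_square by blast
qed

lemma mor_sim_Comp_iso_left:
  assumes b: "b \<in> Mor C" and u: "is_iso C u" "Dom C u = Cod C b"
  shows "mor_sim C b (Comp C u b)"
proof -
  have "iso_square C b (Comp C u b) (Ident C (Dom C b)) u"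
    unfolding iso_square_def using assms by (simp add: is_iso_Mor is_iso_Ident Dom_in_Ob)
  then show ?thesis unfolding mor_sim_iff_iso_square by blast
qed

lemma iso_mor_sim_Ident:
  assumes "is_iso C a" shows "mor_sim C a (Ident C (Dom C a))"
proof -
  have "iso_square C a (Ident C (Dom C a)) (Ident C (Dom C a)) (inv_mor C a)"
    unfolding iso_square_def
    using assms by (simp add: inv_mor is_iso_inv_mor is_iso_Mor is_iso_Ident Dom_in_Ob)
  then show ?thesis unfolding mor_sim_iff_iso_square by blast
qed

lemma iso_square_facts:
  assumes "iso_square C f g s s'"
  shows "f \<in> Mor C" "g \<in> Mor C" "is_iso C s" "is_iso C s'" "Dom C s = Dom C f" "Cod C s = Dom C g"
    "Dom C s' = Cod C f" "Cod C s' = Cod C g"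
  using assms unfolding iso_square_def by auto

lemma iso_square_eq:
  assumes sq: "iso_square C f g s s'"
  shows "g = Comp C s' (Comp C f (inv_mor C s))"
proof -
  note [simp] = iso_square_facts[OF sq] inv_mor[of C s] is_iso_Mor[of C s] is_iso_Mor[of C s']
  have "Comp C s' (Comp C f (inv_mor C s)) = Comp C (Comp C g s) (inv_mor C s)"
    using sq unfolding iso_square_def by (simp add: Comp_assoc)
  then show ?thesis by (simp add: inv_mor_Comp_cancel_right)
qed

lemma iso_square_inv_mor:
  assumes sq: "iso_square C f g s s'"
  shows "iso_square C g f (inv_mor C s) (inv_mor C s')"
proof -
  note [simp] = iso_square_facts[OF sq] inv_mor[of C s] inv_mor[of C s'] is_iso_Mor[of C s] is_iso_Mor[of C s']
  have "Comp C (inv_mor C s') g = Comp C f (inv_mor C s)"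
    by (subst iso_square_eq[OF sq]) (simp add: inv_mor_Comp_cancel_left)
  then show ?thesis
    unfolding iso_square_def by (simp add: is_iso_inv_mor)
qed

lemma iso_square_is_iso:
  assumes sq: "iso_square C f g s s'" and f: "is_iso C f"
  shows "is_iso C g"
  using iso_square_facts[OF sq] f
  by (subst iso_square_eq[OF sq]) (simp add: is_iso_Comp is_iso_inv_mor inv_mor is_iso_Mor)

lemma mor_sim_is_iso_iff: "mor_sim C f g \<Longrightarrow> is_iso C f \<longleftrightarrow> is_iso C g"
  unfolding mor_sim_iff_iso_square by (metis iso_square_inv_mor iso_square_is_iso)

end

definition composable :: "('o, 'm) category \<Rightarrow> 'm \<Rightarrow> 'm \<Rightarrow> bool" where
  "composable C a b \<longleftrightarrow> a \<in> Mor C \<and> b \<in> Mor C \<and> Cod C a = Dom C b"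

lemma mem_decomps: "(a, b) \<in> decomps C \<phi> \<longleftrightarrow> composable C a b \<and> Comp C b a = \<phi>"
  unfolding decomps_def composable_def by auto

context cat begin

lemma decomps_DomCod:
  assumes "(a, b) \<in> decomps C \<phi>"
  shows "a \<in> Mor C" "b \<in> Mor C" "Cod C a = Dom C b" "Comp C b a = \<phi>"
    "Dom C a = Dom C \<phi>" "Cod C b = Cod C \<phi>"
  using assms by (auto simp: mem_decomps composable_def)

lemma iso_square_decomps:
  assumes sq: "iso_square C f g s s'" and d: "(a, b) \<in> decomps C f"
  shows "(Comp C a (inv_mor C s), Comp C s' b) \<in> decomps C g"
proof -
  note [simp] = iso_square_facts[OF sq] decomps_DomCod(1-3,5,6)[OF d] inv_mor[of C s]
    is_iso_Mor[of C s] is_iso_Mor[of C s']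
  have "Comp C (Comp C s' b) (Comp C a (inv_mor C s)) = Comp C s' (Comp C (Comp C b a) (inv_mor C s))"
    by (simp add: Comp_assoc[symmetric])
  also have "\<dots> = g"
    using iso_square_eq[OF sq] decomps_DomCod(4)[OF d] by simp
  finally show ?thesis
    unfolding mem_decomps composable_def by simp
qed

lemma iso_square_bij_betw_decomps:
  assumes sq: "iso_square C f g s s'"
  shows "bij_betw (\<lambda>(a, b). (Comp C a (inv_mor C s), Comp C s' b)) (decomps C f) (decomps C g)"
proof (rule bij_betw_byWitness[where f' = "\<lambda>(a, b). (Comp C a s, Comp C (inv_mor C s') b)"])
  note facts = iso_square_facts[OF sq]
  note sq' = iso_square_inv_mor[OF sq]
  show "\<forall>d\<in>decomps C f. (\<lambda>(a, b). (Comp C a s, Comp C (inv_mor C s') b))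
      ((\<lambda>(a, b). (Comp C a (inv_mor C s), Comp C s' b)) d) = d"
    using facts decomps_DomCod by (auto simp: Comp_inv_mor_cancel_right inv_mor_Comp_cancel_left)
  show "\<forall>d\<in>decomps C g. (\<lambda>(a, b). (Comp C a (inv_mor C s), Comp C s' b))
      ((\<lambda>(a, b). (Comp C a s, Comp C (inv_mor C s') b)) d) = d"
    using facts decomps_DomCod by (auto simp: inv_mor_Comp_cancel_right Comp_inv_mor_cancel_left)
  show "(\<lambda>(a, b). (Comp C a (inv_mor C s), Comp C s' b)) ` decomps C f \<subseteq> decomps C g"
    using iso_square_decomps[OF sq] by auto
  show "(\<lambda>(a, b). (Comp C a s, Comp C (inv_mor C s') b)) ` decomps C g \<subseteq> decomps C f"
    using iso_square_decomps[OF sq'] facts by (auto simp: inv_mor_inv_mor)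
qed

section \<open>Counting isomorphisms\<close>

lemma card_isos_eq_card_Aut:
  assumes r: "is_iso C r" "Dom C r = X" "Cod C r = Y"
  shows "card (isos C X Y) = card (Aut C X)"
proof -
  have "bij_betw (Comp C r) (Aut C X) (isos C X Y)"
    by (rule bij_betw_byWitness[where f' = "Comp C (inv_mor C r)"])
      (use r in \<open>auto simp: Aut_def isos_def is_iso_Mor is_iso_Comp is_iso_inv_mor inv_mor
          inv_mor_Comp_cancel_left Comp_inv_mor_cancel_left\<close>)
  then show ?thesis by (simp add: bij_betw_same_card)
qed

lemma card_isos_from_Dom_eq_Cod:
  assumes r: "is_iso C r"
  shows "card (isos_from C (Dom C r)) = card (isos_from C (Cod C r))"
proof -
  have "bij_betw (\<lambda>s. Comp C s (inv_mor C r)) (isos_from C (Dom C r)) (isos_from C (Cod C r))"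
    by (rule bij_betw_byWitness[where f' = "\<lambda>t. Comp C t r"])
      (use r in \<open>auto simp: isos_from_def is_iso_Mor is_iso_Comp is_iso_inv_mor inv_mor
          inv_mor_Comp_cancel_right Comp_inv_mor_cancel_right\<close>)
  then show ?thesis by (simp add: bij_betw_same_card)
qed

lemma card_isos_to_eq_card_isos_from: "card (isos_to C X) = card (isos_from C X)"
proof -
  have "bij_betw (inv_mor C) (isos_from C X) (isos_to C X)"
    by (rule bij_betw_byWitness[where f' = "inv_mor C"])
      (auto simp: isos_from_def isos_to_def inv_mor is_iso_inv_mor inv_mor_inv_mor)
  then show ?thesis by (simp add: bij_betw_same_card)
qed

text \<open>A factorization with invertible first (last) factor is determined by that factor.\<close>

lemma card_decomps_iso_fst:
  assumes p: "p \<in> Mor C"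
  shows "card {d \<in> decomps C p. is_iso C (fst d)} = card (isos_from C (Dom C p))"
proof -
  have "bij_betw fst {d \<in> decomps C p. is_iso C (fst d)} (isos_from C (Dom C p))"
  proof (rule bij_betw_byWitness[where f' = "\<lambda>s. (s, Comp C p (inv_mor C s))"])
    show "\<forall>d\<in>{d \<in> decomps C p. is_iso C (fst d)}. (fst d, Comp C p (inv_mor C (fst d))) = d"
      using decomps_DomCod by (fastforce simp: inv_mor_Comp_cancel_right)
    show "fst ` {d \<in> decomps C p. is_iso C (fst d)} \<subseteq> isos_from C (Dom C p)"
      using decomps_DomCod by (fastforce simp: isos_from_def)
    show "(\<lambda>s. (s, Comp C p (inv_mor C s))) ` isos_from C (Dom C p) \<subseteq> {d \<in> decomps C p. is_iso C (fst d)}"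
      using p by (auto simp: isos_from_def mem_decomps composable_def inv_mor is_iso_Mor
          Comp_inv_mor_cancel_right)
  qed simp
  then show ?thesis by (simp add: bij_betw_same_card)
qed

lemma card_decomps_iso_snd:
  assumes p: "p \<in> Mor C"
  shows "card {d \<in> decomps C p. is_iso C (snd d)} = card (isos_to C (Cod C p))"
proof -
  have "bij_betw snd {d \<in> decomps C p. is_iso C (snd d)} (isos_to C (Cod C p))"
  proof (rule bij_betw_byWitness[where f' = "\<lambda>s. (Comp C (inv_mor C s) p, s)"])
    show "\<forall>d\<in>{d \<in> decomps C p. is_iso C (snd d)}. (Comp C (inv_mor C (snd d)) p, snd d) = d"
      using decomps_DomCod by (fastforce simp: inv_mor_Comp_cancel_left)
    show "snd ` {d \<in> decomps C p. is_iso C (snd d)} \<subseteq> isos_to C (Cod C p)"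
      using decomps_DomCod by (fastforce simp: isos_to_def)
    show "(\<lambda>s. (Comp C (inv_mor C s) p, s)) ` isos_to C (Cod C p) \<subseteq> {d \<in> decomps C p. is_iso C (snd d)}"
      using p by (auto simp: isos_to_def mem_decomps composable_def inv_mor is_iso_Mor
          Comp_inv_mor_cancel_left)
  qed simp
  then show ?thesis by (simp add: bij_betw_same_card)
qed

end

locale decomp_finite_cat = cat +
  assumes decomposition_finite: "decomposition_finite C"
begin

lemma finite_decomps [simp]: "finite (decomps C \<phi>)"
proof (cases "\<phi> \<in> Mor C")
  case False
  then have "decomps C \<phi> = {}" by (auto simp: decomps_def)
  then show ?thesis by simp
qed (use decomposition_finite in \<open>auto simp: decomposition_finite_def\<close>)

lemma finite_isos_from:
  assumes X: "X \<in> Ob C"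
  shows "finite (isos_from C X)"
proof -
  have "isos_from C X \<subseteq> fst ` decomps C (Ident C X)"
  proof
    fix s assume "s \<in> isos_from C X"
    then have s: "is_iso C s" "Dom C s = X" by (auto simp: isos_from_def)
    then have "(s, inv_mor C s) \<in> decomps C (Ident C X)"
      by (auto simp: mem_decomps composable_def inv_mor is_iso_Mor)
    then show "s \<in> fst ` decomps C (Ident C X)" by force
  qed
  then show ?thesis using finite_decomps finite_subset by blast
qed

text \<open>The isomorphisms out of \<open>X\<close> are sorted by their target \<open>Y \<in> Iso C X\<close>,
  and each target receives \<open>card (Aut C X)\<close> of them.\<close>
lemma card_isos_from:
  assumes X: "X \<in> Ob C"
  shows "card (isos_from C X) = card (Iso C X) * card (Aut C X)"
proof -
  have union: "isos_from C X = (\<Union>Y\<in>Iso C X. isos C X Y)"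
    unfolding isos_from_def Iso_def isos_def using Cod_in_Ob is_iso_Mor by fastforce
  have "finite (Iso C X)"
    using finite_isos_from[OF X] finite_surj[of "isos_from C X" "Iso C X" "Cod C"]
    by (force simp: Iso_def isos_from_def)
  moreover have "\<forall>Y\<in>Iso C X. finite (isos C X Y)"
    using finite_isos_from[OF X] union by (metis UN_upper finite_subset)
  ultimately have "card (isos_from C X) = (\<Sum>Y\<in>Iso C X. card (isos C X Y))"
    unfolding union by (intro card_UN_disjoint) (auto simp: isos_def)
  also have "\<dots> = (\<Sum>Y\<in>Iso C X. card (Aut C X))"
    by (intro sum.cong refl) (auto simp: Iso_def card_isos_eq_card_Aut)
  finally show ?thesis by simp
qed

end

section \<open>The coproduct\<close>

context decomp_finite_cat begin

lemma lookup_coprod: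
  "Poly_Mapping.lookup (coprod C x) (a, b) =
    (if composable C a b then Poly_Mapping.lookup x (Comp C b a) else 0)"
proof -
  have "Poly_Mapping.lookup (coprod C x) (a, b) =
      (\<Sum>\<phi>\<in>Poly_Mapping.keys x. (Poly_Mapping.lookup x \<phi> when (a, b) \<in> decomps C \<phi>))"
    unfolding coprod_def lookup_sum lookup_single by (simp add: when_def)
  also have "\<dots> = (\<Sum>\<phi>\<in>Poly_Mapping.keys x.
      ((Poly_Mapping.lookup x \<phi> when \<phi> = Comp C b a) when composable C a b))"
    by (intro sum.cong refl) (auto simp: when_def mem_decomps)
  finally show ?thesis by (auto simp: when_def in_keys_iff)
qed

lemma lookup_coprod_id:
  "Poly_Mapping.lookup (coprod_id C y) (a, b, c) =
    (if composable C a b then Poly_Mapping.lookup y (Comp C b a, c) else 0)"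
proof -
  have "Poly_Mapping.lookup (coprod_id C y) (a, b, c) =
      (\<Sum>p\<in>Poly_Mapping.keys y. \<Sum>d\<in>decomps C (fst p). ((Poly_Mapping.lookup y p when snd p = c) when d = (a, b)))"
    unfolding coprod_id_def lookup_sum lookup_single by (intro sum.cong refl) (auto simp: when_def)
  also have "\<dots> = (\<Sum>p\<in>Poly_Mapping.keys y.
      ((Poly_Mapping.lookup y p when p = (Comp C b a, c)) when composable C a b))"
    by (intro sum.cong refl) (auto simp: when_def when_def mem_decomps)
  finally show ?thesis by (auto simp: when_def in_keys_iff)
qed

lemma lookup_id_coprod:
  "Poly_Mapping.lookup (id_coprod C y) (a, b, c) =
    (if composable C b c then Poly_Mapping.lookup y (a, Comp C c b) else 0)"
proof -
  have "Poly_Mapping.lookup (id_coprod C y) (a, b, c) =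
      (\<Sum>p\<in>Poly_Mapping.keys y. \<Sum>d\<in>decomps C (snd p). ((Poly_Mapping.lookup y p when fst p = a) when d = (b, c)))"
    unfolding id_coprod_def lookup_sum lookup_single by (intro sum.cong refl) (auto simp: when_def)
  also have "\<dots> = (\<Sum>p\<in>Poly_Mapping.keys y.
      ((Poly_Mapping.lookup y p when p = (a, Comp C c b)) when composable C b c))"
    by (intro sum.cong refl) (auto simp: when_def when_def mem_decomps)
  finally show ?thesis by (auto simp: when_def in_keys_iff)
qed

theorem coprod_coassoc: "coprod_id C (coprod C x) = id_coprod C (coprod C x)"
proof (rule poly_mapping_eqI)
  fix k
  show "Poly_Mapping.lookup (coprod_id C (coprod C x)) k = Poly_Mapping.lookup (id_coprod C (coprod C x)) k"
    by (cases k) (auto simp: lookup_coprod_id lookup_id_coprod lookup_coprod composable_def Comp_assoc)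
qed

lemma coprod_add: "coprod C (x + y) = coprod C x + coprod C y"
  by (rule poly_mapping_eqI) (auto simp: lookup_coprod lookup_add)

lemma coprod_diff: "coprod C (x - y) = coprod C x - coprod C y"
  by (rule poly_mapping_eqI) (auto simp: lookup_coprod lookup_minus)

lemma coprod_sum: "coprod C (\<Sum>i\<in>A. f i) = (\<Sum>i\<in>A. coprod C (f i))"
proof (rule poly_mapping_eqI)
  fix k
  show "Poly_Mapping.lookup (coprod C (\<Sum>i\<in>A. f i)) k = Poly_Mapping.lookup (\<Sum>i\<in>A. coprod C (f i)) k"
    by (cases k) (simp add: lookup_coprod lookup_sum)
qed

lemma coprod_scale: "coprod C (scale c x) = scale c (coprod C x)"
  by (rule poly_mapping_eqI) (auto simp: lookup_coprod)

lemma coprod_single: "coprod C (Poly_Mapping.single p v) = (\<Sum>d\<in>decomps C p. Poly_Mapping.single d v)"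
proof (rule poly_mapping_eqI)
  fix k
  show "Poly_Mapping.lookup (coprod C (Poly_Mapping.single p v)) k =
      Poly_Mapping.lookup (\<Sum>d\<in>decomps C p. Poly_Mapping.single d v) k"
    by (cases k) (auto simp: lookup_coprod lookup_sum lookup_single when_def when_def mem_decomps)
qed

lemma single_diff_in_Csim:
  assumes "mor_sim C f g"
  shows "Poly_Mapping.single f c - Poly_Mapping.single g c \<in> Csim C"
proof -
  have "Poly_Mapping.single f 1 - Poly_Mapping.single g 1 \<in> Csim C"
    using assms unfolding Csim_def sim_gens_def by (blast intro: lspan_base)
  moreover have "scale c (Poly_Mapping.single f 1 - Poly_Mapping.single g 1) =
      Poly_Mapping.single f c - Poly_Mapping.single g c"
    by (rule poly_mapping_eqI) (simp add: lookup_minus lookup_single when_def)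
  ultimately show ?thesis unfolding Csim_def by (metis lspan_scale)
qed

lemma single_pair_diff_in_coideal:
  assumes "mor_sim C a a'" "mor_sim C b b'"
  shows "Poly_Mapping.single (a, b) 1 - Poly_Mapping.single (a', b') 1 \<in>
     sub_sum (tens_sub (free_mod C) (Csim C)) (tens_sub (Csim C) (free_mod C))"
proof -
  have "Poly_Mapping.single a' 1 \<in> free_mod C" "Poly_Mapping.single b 1 \<in> free_mod C"
    using assms unfolding mor_sim_def free_mod_def by auto
  moreover have "Poly_Mapping.single a 1 - Poly_Mapping.single a' 1 \<in> Csim C"
      "Poly_Mapping.single b 1 - Poly_Mapping.single b' 1 \<in> Csim C"
    using assms by (simp_all add: single_diff_in_Csim)
  ultimately have "tens (Poly_Mapping.single a' 1) (Poly_Mapping.single b 1 - Poly_Mapping.single b' 1) \<in> tens_sub (free_mod C) (Csim C)"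
      "tens (Poly_Mapping.single a 1 - Poly_Mapping.single a' 1) (Poly_Mapping.single b 1) \<in> tens_sub (Csim C) (free_mod C)"
    unfolding tens_sub_def by (blast intro: lspan_base)+
  then show ?thesis
    unfolding single_pair_diff_eq_tens sub_sum_def by blast
qed

lemma coprod_sim_gen_in_coideal:
  assumes fg: "mor_sim C f g"
  shows "coprod C (Poly_Mapping.single f 1 - Poly_Mapping.single g 1) \<in>
     sub_sum (tens_sub (free_mod C) (Csim C)) (tens_sub (Csim C) (free_mod C))"
proof -
  obtain s s' where sq: "iso_square C f g s s'"
    using fg unfolding mor_sim_iff_iso_square by blast
  note facts = iso_square_facts[OF sq]
  define \<beta> where "\<beta> = (\<lambda>(a, b). (Comp C a (inv_mor C s), Comp C s' b))"
  have bij: "bij_betw \<beta> (decomps C f) (decomps C g)"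
    unfolding \<beta>_def by (rule iso_square_bij_betw_decomps[OF sq])
  have "coprod C (Poly_Mapping.single f 1 - Poly_Mapping.single g 1) =
      (\<Sum>d\<in>decomps C f. Poly_Mapping.single d 1 - Poly_Mapping.single (\<beta> d) 1)"
    by (simp add: coprod_diff coprod_single sum.reindex_bij_betw[OF bij, symmetric] sum_subtractf)
  also have "\<dots> \<in> sub_sum (tens_sub (free_mod C) (Csim C)) (tens_sub (Csim C) (free_mod C))"
    unfolding tens_sub_def sub_sum_lspan
  proof (rule lspan_sum[OF finite_decomps])
    fix d assume d: "d \<in> decomps C f"
    obtain a b where ab: "d = (a, b)" by (cases d)
    have "mor_sim C a (Comp C a (inv_mor C s))"
      using facts decomps_DomCod[OF d[unfolded ab]]
      by (intro mor_sim_Comp_iso_right) (simp_all add: inv_mor is_iso_inv_mor)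
    moreover have "mor_sim C b (Comp C s' b)"
      using facts decomps_DomCod[OF d[unfolded ab]] by (intro mor_sim_Comp_iso_left) simp_all
    ultimately show "Poly_Mapping.single d 1 - Poly_Mapping.single (\<beta> d) 1 \<in> lspan
        ({tens u v |u v. u \<in> free_mod C \<and> v \<in> Csim C} \<union> {tens u v |u v. u \<in> Csim C \<and> v \<in> free_mod C})"
      using single_pair_diff_in_coideal unfolding ab \<beta>_def tens_sub_def sub_sum_lspan by auto
  qed
  finally show ?thesis .
qed

theorem coprod_Csim:
  assumes "x \<in> Csim C"
  shows "coprod C x \<in> sub_sum (tens_sub (free_mod C) (Csim C)) (tens_sub (Csim C) (free_mod C))"
  using assms unfolding Csim_def
proof (induction x rule: lspan.induct)
  case lspan_zero
  show ?case unfolding tens_sub_def sub_sum_lspan by (simp add: coprod_def lspan.lspan_zero)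
next
  case (lspan_step x y c)
  then obtain f g where "mor_sim C f g" "x = Poly_Mapping.single f 1 - Poly_Mapping.single g 1"
    unfolding sim_gens_def by blast
  then have "coprod C x \<in> sub_sum (tens_sub (free_mod C) (Csim C)) (tens_sub (Csim C) (free_mod C))"
    using coprod_sim_gen_in_coideal by blast
  then show ?case
    using lspan_step.IH unfolding tens_sub_def sub_sum_lspan Csim_def
    by (simp add: coprod_add coprod_scale lspan_add lspan_scale)
qed

end

section \<open>The counit\<close>

lemma eps_add: "eps C (x + y) = eps C x + eps C y"
  unfolding eps_def by (rule sum_keys_add) (simp_all add: distrib_right)

lemma eps_scale: "eps C (scale c x) = c * eps C x"
proof -
  have "eps C (scale c x) = (\<Sum>f\<in>Poly_Mapping.keys x. Poly_Mapping.lookup (scale c x) f * eps_val C f)"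
    unfolding eps_def by (rule sum_keys_superset) (simp_all add: keys_scale_subset)
  then show ?thesis by (simp add: eps_def sum_distrib_left mult.assoc)
qed

lemma eps_single: "eps C (Poly_Mapping.single f v) = v * eps_val C f"
  by (simp add: eps_def)

lemma eps_id_add: "eps_id C (x + y) = eps_id C x + eps_id C y"
  unfolding eps_id_def by (rule sum_keys_add) (simp_all add: distrib_left single_add)

lemma eps_id_single: "eps_id C (Poly_Mapping.single p v) = Poly_Mapping.single (snd p) (eps_val C (fst p) * v)"
  by (simp add: eps_id_def)

lemma eps_id_sum: "eps_id C (\<Sum>i\<in>A. f i) = (\<Sum>i\<in>A. eps_id C (f i))"
  by (induction A rule: infinite_finite_induct) (simp_all add: eps_id_def[of C 0] eps_id_add)

lemma id_eps_add: "id_eps C (x + y) = id_eps C x + id_eps C y"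
  unfolding id_eps_def by (rule sum_keys_add) (simp_all add: distrib_right single_add)

lemma id_eps_single: "id_eps C (Poly_Mapping.single p v) = Poly_Mapping.single (fst p) (v * eps_val C (snd p))"
  by (simp add: id_eps_def)

lemma id_eps_sum: "id_eps C (\<Sum>i\<in>A. f i) = (\<Sum>i\<in>A. id_eps C (f i))"
  by (induction A rule: infinite_finite_induct) (simp_all add: id_eps_def[of C 0] id_eps_add)

context decomp_finite_cat begin

lemma eps_val_iso:
  assumes a: "is_iso C a"
  shows "eps_val C a = unit_inv (of_nat (card (isos_from C (Dom C a))))"
proof -
  have ex: "\<exists>X\<in>Ob C. mor_sim C a (Ident C X)"
    using iso_mor_sim_Ident[OF a] Dom_in_Ob[OF is_iso_Mor[OF a]] by blast
  define X where "X = (SOME X. X \<in> Ob C \<and> mor_sim C a (Ident C X))"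
  have X: "X \<in> Ob C" "mor_sim C a (Ident C X)"
    using someI_ex[OF ex[unfolded Bex_def]] unfolding X_def by auto
  then obtain s s' where sq: "iso_square C a (Ident C X) s s'"
    unfolding mor_sim_iff_iso_square by blast
  have "card (isos_from C (Dom C a)) = card (isos_from C X)"
    using card_isos_from_Dom_eq_Cod[OF iso_square_facts(3)[OF sq]] iso_square_facts[OF sq] X(1)
    by simp
  then have "card (isos_from C (Dom C a)) = card (Iso C X) * card (Aut C X)"
    using card_isos_from[OF X(1)] by simp
  then show ?thesis
    using ex unfolding eps_val_def X_def[symmetric] by (simp add: Let_def del: of_nat_mult)
qed

lemma eps_val_not_iso:
  assumes "\<not> is_iso C a" shows "eps_val C a = 0"
proof -
  have "\<not> (\<exists>X\<in>Ob C. mor_sim C a (Ident C X))"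
    using assms mor_sim_is_iso_iff is_iso_Ident by blast
  then show ?thesis unfolding eps_val_def by simp
qed

lemma eps_val_mor_sim:
  assumes fg: "mor_sim C f g"
  shows "eps_val C f = eps_val C g"
proof (cases "is_iso C f")
  case True
  obtain s s' where sq: "iso_square C f g s s'"
    using fg unfolding mor_sim_iff_iso_square by blast
  have "card (isos_from C (Dom C f)) = card (isos_from C (Dom C g))"
    using card_isos_from_Dom_eq_Cod[OF iso_square_facts(3)[OF sq]] iso_square_facts[OF sq]
    by simp
  then show ?thesis
    using True mor_sim_is_iso_iff[OF fg] by (simp add: eps_val_iso)
next
  case False
  then show ?thesis using mor_sim_is_iso_iff[OF fg] by (simp add: eps_val_not_iso)
qed

lemma eps_Csim: "x \<in> Csim C \<Longrightarrow> eps C x = 0"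
  unfolding Csim_def
proof (induction x rule: lspan.induct)
  case (lspan_step x y c)
  then obtain f g where fg: "mor_sim C f g" "x = Poly_Mapping.single f 1 + Poly_Mapping.single g (-1)"
    unfolding sim_gens_def by (auto simp: single_uminus)
  then have "eps C x = 0" by (simp add: eps_add eps_single eps_val_mor_sim)
  then show ?case using lspan_step.IH by (simp add: eps_add eps_scale)
qed (simp add: eps_def)

text \<open>Spreading the coefficient \<open>c\<close> of \<open>p\<close> evenly over \<open>card A\<close> morphisms similar to \<open>p\<close>
  changes nothing modulo \<open>Csim C\<close>.\<close>
lemma sum_single_sim_minus_in_Csim:
  assumes A: "finite A" and e: "of_nat (card A) * e = 1" and sim: "\<And>i. i \<in> A \<Longrightarrow> mor_sim C (q i) p"
  shows "(\<Sum>i\<in>A. Poly_Mapping.single (q i) (e * c)) - Poly_Mapping.single p c \<in> Csim C"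
proof -
  have "Poly_Mapping.single p c = (\<Sum>i\<in>A. Poly_Mapping.single p (e * c))"
    by (simp add: sum_single_const mult.assoc[symmetric] e)
  then have "(\<Sum>i\<in>A. Poly_Mapping.single (q i) (e * c)) - Poly_Mapping.single p c =
      (\<Sum>i\<in>A. Poly_Mapping.single (q i) (e * c) - Poly_Mapping.single p (e * c))"
    by (simp add: sum_subtractf)
  also have "\<dots> \<in> Csim C"
    unfolding Csim_def by (rule lspan_sum[OF A]) (use sim single_diff_in_Csim[unfolded Csim_def] in blast)
  finally show ?thesis .
qed

context
  assumes unit: "\<forall>X\<in>Ob C. (of_nat (card (Iso C X) * card (Aut C X)) :: 'r::comm_ring_1) dvd 1"
begin

lemma card_isos_from_unit_inv:
  assumes "X \<in> Ob C"
  shows "of_nat (card (isos_from C X)) * unit_inv (of_nat (card (isos_from C X))) = (1 :: 'r)"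
  using unit assms by (simp add: card_isos_from unit_inv_right del: of_nat_mult)

lemma eps_id_coprod_single:
  assumes p: "p \<in> Mor C"
  shows "eps_id C (coprod C (Poly_Mapping.single p (c :: 'r))) - Poly_Mapping.single p c \<in> Csim C"
proof -
  define Di where "Di = {d \<in> decomps C p. is_iso C (fst d)}"
  define e :: 'r where "e = unit_inv (of_nat (card (isos_from C (Dom C p))))"
  have "eps_id C (coprod C (Poly_Mapping.single p c)) =
      (\<Sum>d\<in>decomps C p. Poly_Mapping.single (snd d) (eps_val C (fst d) * c))"
    by (simp add: coprod_single eps_id_sum eps_id_single)
  also have "\<dots> = (\<Sum>d\<in>Di. Poly_Mapping.single (snd d) (eps_val C (fst d) * c))"
    unfolding Di_def by (rule sum.mono_neutral_right) (auto simp: eps_val_not_iso)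
  also have "\<dots> = (\<Sum>d\<in>Di. Poly_Mapping.single (snd d) (e * c))"
    unfolding Di_def e_def using decomps_DomCod
    by (intro sum.cong refl) (fastforce simp: eps_val_iso)
  finally have eq: "eps_id C (coprod C (Poly_Mapping.single p c)) = \<dots>" .
  have "of_nat (card Di) * e = 1"
    unfolding Di_def e_def card_decomps_iso_fst[OF p]
    by (rule card_isos_from_unit_inv) (rule Dom_in_Ob[OF p])
  moreover have "mor_sim C (snd d) p" if "d \<in> Di" for d
    using that decomps_DomCod unfolding Di_def
    by (cases d) (fastforce intro: mor_sim_Comp_iso_right)
  ultimately show ?thesis
    unfolding eq Di_def by (intro sum_single_sim_minus_in_Csim) auto
qed

lemma id_eps_coprod_single:
  assumes p: "p \<in> Mor C"
  shows "id_eps C (coprod C (Poly_Mapping.single p (c :: 'r))) - Poly_Mapping.single p c \<in> Csim C"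
proof -
  define Di where "Di = {d \<in> decomps C p. is_iso C (snd d)}"
  define e :: 'r where "e = unit_inv (of_nat (card (isos_from C (Cod C p))))"
  have "id_eps C (coprod C (Poly_Mapping.single p c)) =
      (\<Sum>d\<in>decomps C p. Poly_Mapping.single (fst d) (c * eps_val C (snd d)))"
    by (simp add: coprod_single id_eps_sum id_eps_single)
  also have "\<dots> = (\<Sum>d\<in>Di. Poly_Mapping.single (fst d) (c * eps_val C (snd d)))"
    unfolding Di_def by (rule sum.mono_neutral_right) (auto simp: eps_val_not_iso)
  also have "\<dots> = (\<Sum>d\<in>Di. Poly_Mapping.single (fst d) (e * c))"
    unfolding Di_def e_def using decomps_DomCod
    by (intro sum.cong refl) (fastforce simp: eps_val_iso card_isos_from_Dom_eq_Cod mult.commute)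
  finally have eq: "id_eps C (coprod C (Poly_Mapping.single p c)) = \<dots>" .
  have "of_nat (card Di) * e = 1"
    unfolding Di_def e_def card_decomps_iso_snd[OF p] card_isos_to_eq_card_isos_from
    by (rule card_isos_from_unit_inv) (rule Cod_in_Ob[OF p])
  moreover have "mor_sim C (fst d) p" if "d \<in> Di" for d
    using that decomps_DomCod unfolding Di_def
    by (cases d) (fastforce intro: mor_sim_Comp_iso_left)
  ultimately show ?thesis
    unfolding eq Di_def by (intro sum_single_sim_minus_in_Csim) auto
qed

theorem counit_coprod:
  assumes x: "(x :: _ \<Rightarrow>\<^sub>0 'r) \<in> free_mod C"
  shows "eps_id C (coprod C x) - x \<in> Csim C" "id_eps C (coprod C x) - x \<in> Csim C"
proof -
  let ?s = "\<lambda>k. Poly_Mapping.single k (Poly_Mapping.lookup x k)"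
  have keys: "Poly_Mapping.keys x \<subseteq> Mor C" using x unfolding free_mod_def by auto
  have "eps_id C (coprod C x) - x = (\<Sum>k\<in>Poly_Mapping.keys x. eps_id C (coprod C (?s k)) - ?s k)"
    by (subst (1 2) single_sum_keys) (simp add: coprod_sum eps_id_sum sum_subtractf)
  also have "\<dots> \<in> Csim C"
    unfolding Csim_def by (rule lspan_sum) (use eps_id_coprod_single[unfolded Csim_def] keys in auto)
  finally show "eps_id C (coprod C x) - x \<in> Csim C" .
  have "id_eps C (coprod C x) - x = (\<Sum>k\<in>Poly_Mapping.keys x. id_eps C (coprod C (?s k)) - ?s k)"
    by (subst (1 2) single_sum_keys) (simp add: coprod_sum id_eps_sum sum_subtractf)
  also have "\<dots> \<in> Csim C"
    unfolding Csim_def by (rule lspan_sum) (use id_eps_coprod_single[unfolded Csim_def] keys in auto)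
  finally show "id_eps C (coprod C x) - x \<in> Csim C" .
qed

end

end

theorem proposition4p6:
  fixes C :: "('o, 'm) category"
  assumes cat: "is_category C"
    and dfin: "decomposition_finite C"
  shows "(\<forall>x::'m \<Rightarrow>\<^sub>0 int. x \<in> Csim C \<longrightarrow>
            coprod C x \<in> sub_sum (tens_sub (free_mod C) (Csim C)) (tens_sub (Csim C) (free_mod C)))
    \<and> (\<forall>x::'m \<Rightarrow>\<^sub>0 int. x \<in> free_mod C \<longrightarrow>
            coprod_id C (coprod C x) = id_coprod C (coprod C x))
    \<and> ((\<forall>X\<in>Ob C. (of_nat (card (Iso C X) * card (Aut C X)) :: 'r::comm_ring_1) dvd 1) \<longrightarrow>
         (\<forall>c::'m \<Rightarrow>\<^sub>0 'r. c \<in> Csim C \<longrightarrow> eps C c = 0)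
       \<and> (\<forall>x::'m \<Rightarrow>\<^sub>0 'r. x \<in> free_mod C \<longrightarrow>
            eps_id C (coprod C x) - x \<in> Csim C \<and> id_eps C (coprod C x) - x \<in> Csim C))"
proof -
  interpret decomp_finite_cat C
    by unfold_locales (fact cat, fact dfin)
  show ?thesis
    using coprod_Csim coprod_coassoc eps_Csim counit_coprod by blast
qed

end
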